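(* Let $(a_n)_{n\ge0}$ be a sequence of positive real numbers, and set $u_n=\frac{a_{2n-1}}{a_{2n}}$ and $v_n=\frac{2na_{2n}}{(2n+1)a_{2n+1}}$ for $n\ge1$. Suppose (i) $(u_n)$ and $(v_n)$ are decreasing in $n$; (ii) $\sum_{i=1}^n a_{2i-1}u_n^{2i-1}<a_0$ for all $n\ge1$; (iii) $\sum_{i=1}^n 2ia_{2i}v_n^{2i-1}<a_1$ for all $n\ge1$. Then for every $m\ge0$ the polynomial $\sum_{i=0}^m a_ix^i$ has no real root if $m$ is even and exactly one real root (counted with multiplicity) if $m$ is odd. *)

theory Defs
  imports "HOL-Computational_Algebra.Polynomial"
begin

definition partial_poly :: "(nat \<Rightarrow> real) \<Rightarrow> nat \<Rightarrow> real poly" where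
  "partial_poly a m = (\<Sum>i\<le>m. monom (a i) i)"

definition num_real_roots :: "real poly \<Rightarrow> nat" where
  "num_real_roots p = (\<Sum>x\<in>{x. poly p x = 0}. order x p)"

end

theory Submission
  imports Defs
begin

(*
  Write p_m for the m-th partial sum and u_k = a_(2k-1) / a_(2k).  Grouping the terms of p_(2n)
  in pairs gives p_(2n)(x) = a_0 + sum_(i=1..n) x^(2i-1) (a_(2i-1) + a_(2i) x).  For x < 0 the
  i-th pair is negative only if -x < u_i; if k is the largest such index, every pair with i <= k
  is at least -a_(2i-1) u_k^(2i-1), so by (ii) the sum stays above -a_0 and p_(2n) > 0.
  The derivative of p_(2n+1) is the even partial sum for the coefficients (i+1) a_(i+1), for
  which (ii) is exactly (iii); hence p_(2n+1) is strictly increasing, and having odd degree it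
  has exactly one real root, which is simple.
*)

lemma coeff_partial_poly: "coeff (partial_poly a m) k = (if k \<le> m then a k else 0)"
  unfolding partial_poly_def by (simp add: coeff_sum)

lemma poly_partial_poly: "poly (partial_poly a m) x = (\<Sum>i\<le>m. a i * x ^ i)"
  unfolding partial_poly_def by (simp add: poly_sum poly_monom)

lemma degree_partial_poly: "a m \<noteq> 0 \<Longrightarrow> degree (partial_poly a m) = m"
  by (rule antisym) (auto intro!: degree_le le_degree simp: coeff_partial_poly)

lemma pderiv_partial_poly:
  "pderiv (partial_poly a (Suc m)) = partial_poly (\<lambda>i. real (Suc i) * a (Suc i)) m"
  by (rule poly_eqI) (simp add: coeff_pderiv coeff_partial_poly)

lemma poly_partial_poly_even:
  "poly (partial_poly a (2 * n)) x =
     a 0 + (\<Sum>i=1..n. x ^ (2*i-1) * (a (2*i-1) + a (2*i) * x))"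
proof (induction n)
  case (Suc n)
  have "2 * Suc n = Suc (Suc (2 * n))" by simp
  with Suc show ?case
    by (simp add: poly_partial_poly algebra_simps)
qed (simp add: poly_partial_poly)

lemma odd_degree_real_poly_has_root:
  fixes p :: "real poly"
  assumes "odd (degree p)"
  shows "\<exists>x. poly p x = 0"
proof -
  have root_if_lc_pos: "\<exists>x. poly p x = 0"
    if odd: "odd (degree p)" and lc: "lead_coeff p > 0" for p :: "real poly"
  proof -
    define q where "q = - pcompose p [:0, -1:]"
    have poly_q: "poly q x = - poly p (- x)" for x
      by (simp add: q_def poly_pcompose)
    have "lead_coeff q = lead_coeff p"
      using odd by (simp add: q_def lead_coeff_comp)
    with lc obtain N
      where N: "\<And>x. x \<ge> N \<Longrightarrow> poly p x \<ge> lead_coeff p \<and> poly q x \<ge> lead_coeff p"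
      using poly_pinfty_gt_lc[of p] poly_pinfty_gt_lc[of q]
      by (metis max.bounded_iff)
    define X where "X = max N 1"
    have "- X < X" "poly p (- X) < 0" "0 < poly p X"
      using N[of X] lc poly_q[of X] by (auto simp: X_def)
    then show ?thesis
      using poly_IVT_pos by blast
  qed
  show ?thesis
  proof (cases "lead_coeff p > 0")
    case False
    moreover have "lead_coeff p \<noteq> 0"
      using assms by auto
    ultimately have "lead_coeff (- p) > 0"
      by (simp only: lead_coeff_minus neg_0_less_iff_less)
    then show ?thesis
      using root_if_lc_pos[of "- p"] assms by auto
  qed (use assms root_if_lc_pos in blast)
qed

lemma poly_partial_poly_even_pos:
  fixes a :: "nat \<Rightarrow> real"
  assumes pos: "\<And>n. a n > 0"
    and bound: "\<And>k. k \<ge> 1 \<Longrightarrow>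
      (\<Sum>i=1..k. a (2*i-1) * (a (2*k-1) / a (2*k)) ^ (2*i-1)) < a 0"
  shows "poly (partial_poly a (2 * n)) x > 0"
proof -
  define T where "T i = x ^ (2*i-1) * (a (2*i-1) + a (2*i) * x)" for i
  have T_nonneg: "T i \<ge> 0" if "i \<ge> 1" "x \<ge> 0 \<or> a (2*i-1) / a (2*i) \<le> - x" for i
  proof (cases "x \<ge> 0")
    case True
    then show ?thesis
      using pos[of "2*i-1"] pos[of "2*i"] by (simp add: T_def)
  next
    case False
    with that have "a (2*i-1) + a (2*i) * x \<le> 0"
      using pos[of "2*i"] by (simp add: field_simps)
    moreover have "x ^ (2*i-1) \<le> 0"
      using False \<open>i \<ge> 1\<close> by (simp add: power_le_zero_eq)
    ultimately show ?thesis
      by (simp add: T_def mult_nonpos_nonpos)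
  qed
  have T_lower: "T i \<ge> - (a (2*i-1) * u ^ (2*i-1))" if "i \<ge> 1" "\<bar>x\<bar> \<le> u" for i u
  proof -
    have "\<bar>x ^ (2*i-1)\<bar> \<le> u ^ (2*i-1)"
      using that(2) by (simp add: power_abs power_mono)
    then have "a (2*i-1) * - (u ^ (2*i-1)) \<le> a (2*i-1) * x ^ (2*i-1)"
      using pos[of "2*i-1"] by (intro mult_left_mono) auto
    moreover have "T i = a (2*i-1) * x ^ (2*i-1) + a (2*i) * x ^ (2*i)"
    proof -
      have "x ^ (2*i) = x ^ (2*i-1) * x"
        using that(1) by (simp flip: power_Suc2)
      then show ?thesis
        by (simp add: T_def algebra_simps)
    qed
    moreover have "a (2*i) * x ^ (2*i) \<ge> 0"
      using pos[of "2*i"] by (simp add: zero_le_even_power)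
    ultimately show ?thesis
      by simp
  qed
  have expand: "poly (partial_poly a (2 * n)) x = a 0 + (\<Sum>i=1..n. T i)"
    unfolding T_def by (rule poly_partial_poly_even)
  show ?thesis
  proof (cases "x \<ge> 0 \<or> (\<forall>i\<in>{1..n}. a (2*i-1) / a (2*i) \<le> - x)")
    case True
    then have "(\<Sum>i=1..n. T i) \<ge> 0"
      by (intro sum_nonneg T_nonneg) auto
    then show ?thesis
      using expand pos[of 0] by linarith
  next
    case False
    define S where "S = {i\<in>{1..n}. - x < a (2*i-1) / a (2*i)}"
    define k where "k = Max S"
    have "finite S" "S \<noteq> {}"
      using False unfolding S_def by force+
    then have k: "k \<in> {1..n}" "- x < a (2*k-1) / a (2*k)"
      using Max_in[of S] by (simp_all add: k_def S_def)
    have beyond_k: "a (2*i-1) / a (2*i) \<le> - x" if "i \<in> {k<..n}" for i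
    proof (rule ccontr)
      assume "\<not> a (2*i-1) / a (2*i) \<le> - x"
      with that k(1) have "i \<in> S"
        by (auto simp: S_def)
      then show False
        using that Max_ge[OF \<open>finite S\<close>] by (fastforce simp: k_def)
    qed
    have "\<bar>x\<bar> \<le> a (2*k-1) / a (2*k)"
      using False k(2) by auto
    then have "(\<Sum>i=1..k. T i) \<ge> (\<Sum>i=1..k. - (a (2*i-1) * (a (2*k-1) / a (2*k)) ^ (2*i-1)))"
      by (intro sum_mono T_lower) auto
    moreover have "(\<Sum>i=1..k. - (a (2*i-1) * (a (2*k-1) / a (2*k)) ^ (2*i-1))) > - a 0"
      using bound[of k] k(1) by (simp add: sum_negf)
    moreover have "(\<Sum>i\<in>{k<..n}. T i) \<ge> 0"
      using beyond_k by (intro sum_nonneg T_nonneg) auto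
    moreover have "(\<Sum>i=1..n. T i) = (\<Sum>i=1..k. T i) + (\<Sum>i\<in>{k<..n}. T i)"
      using k(1) by (subst sum.union_disjoint[symmetric]) (auto intro: sum.cong)
    ultimately show ?thesis
      using expand by linarith
  qed
qed

lemma num_real_roots_eq_0:
  assumes "\<And>x. poly p x \<noteq> 0"
  shows "num_real_roots p = 0"
  using assms by (simp add: num_real_roots_def)

lemma num_real_roots_eq_1_if_pderiv_pos:
  fixes p :: "real poly"
  assumes pderiv_pos: "\<And>x. poly (pderiv p) x > 0" and root: "poly p r = 0"
  shows "num_real_roots p = 1"
proof -
  have strict_mono: "poly p x < poly p y" if "x < y" for x y
    using that
  proof (rule DERIV_pos_imp_increasing)
    fix z
    show "\<exists>y. DERIV (poly p) z :> y \<and> y > 0"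
      using poly_DERIV pderiv_pos by blast
  qed
  have roots: "{x. poly p x = 0} = {r}"
  proof (intro equalityI subsetI)
    fix x
    assume "x \<in> {x. poly p x = 0}"
    then show "x \<in> {r}"
      using root strict_mono[of x r] strict_mono[of r x] by (cases x r rule: linorder_cases) auto
  qed (simp add: root)
  have "p \<noteq> 0"
    using pderiv_pos[of 0] by auto
  then have "order r p = Suc (order r (pderiv p))"
    using order_pderiv root by blast
  also have "order r (pderiv p) = 0"
    using pderiv_pos[of r] by (simp add: order_0I)
  finally show ?thesis
    by (simp add: num_real_roots_def roots)
qed

lemma num_real_roots_partial_poly_even:
  fixes a :: "nat \<Rightarrow> real"
  assumes "\<And>n. a n > 0"
    and "\<And>k. k \<ge> 1 \<Longrightarrow>
      (\<Sum>i=1..k. a (2*i-1) * (a (2*k-1) / a (2*k)) ^ (2*i-1)) < a 0"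
  shows "num_real_roots (partial_poly a (2 * n)) = 0"
  using poly_partial_poly_even_pos[OF assms, of n] by (intro num_real_roots_eq_0) (metis less_irrefl)

lemma num_real_roots_partial_poly_odd:
  fixes a :: "nat \<Rightarrow> real"
  assumes pos: "\<And>n. a n > 0"
    and bound: "\<And>k. k \<ge> 1 \<Longrightarrow>
      (\<Sum>i=1..k. 2*real i * a (2*i) *
         ((2*real k * a (2*k)) / ((2*real k+1) * a (2*k+1))) ^ (2*i-1)) < a 1"
  shows "num_real_roots (partial_poly a (Suc (2 * n))) = 1"
proof -
  define p where "p = partial_poly a (Suc (2 * n))"
  define b where "b i = real (Suc i) * a (Suc i)" for i
  have b_odd: "b (2*i-1) = 2 * real i * a (2*i)" if "i \<ge> 1" for i
    using that by (simp add: b_def Suc_diff_Suc)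
  have b_bound: "(\<Sum>i=1..k. b (2*i-1) * (b (2*k-1) / b (2*k)) ^ (2*i-1)) < b 0"
    if "k \<ge> 1" for k
  proof -
    have "b (2*k-1) / b (2*k) = (2*real k * a (2*k)) / ((2*real k+1) * a (2*k+1))"
      using b_odd[OF that] by (simp add: b_def[of "2*k"])
    then have "(\<Sum>i=1..k. b (2*i-1) * (b (2*k-1) / b (2*k)) ^ (2*i-1)) =
      (\<Sum>i=1..k. 2*real i * a (2*i) *
         ((2*real k * a (2*k)) / ((2*real k+1) * a (2*k+1))) ^ (2*i-1))"
      using b_odd by (intro sum.cong) auto
    then show ?thesis
      using bound[OF that] by (simp add: b_def[of 0])
  qed
  have "poly (pderiv p) x > 0" for x
    unfolding p_def pderiv_partial_poly b_def[symmetric]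
    by (rule poly_partial_poly_even_pos) (use pos b_bound in \<open>simp_all add: b_def\<close>)
  moreover have "degree p = Suc (2 * n)"
    unfolding p_def using pos[of "Suc (2 * n)"] by (intro degree_partial_poly) simp
  then obtain r where "poly p r = 0"
    using odd_degree_real_poly_has_root[of p] by auto
  ultimately show ?thesis
    unfolding p_def by (rule num_real_roots_eq_1_if_pderiv_pos)
qed

theorem mainTheorem13:
  fixes a :: "nat \<Rightarrow> real"
  assumes pos: "\<And>n. a n > 0"
    and u_dec: "\<And>n. n \<ge> 1 \<Longrightarrow> a (2*(n+1)-1) / a (2*(n+1)) \<le> a (2*n-1) / a (2*n)"
    and v_dec: "\<And>n. n \<ge> 1 \<Longrightarrow>
        (2*real (n+1) * a (2*(n+1))) / ((2*real (n+1)+1) * a (2*(n+1)+1))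
          \<le> (2*real n * a (2*n)) / ((2*real n+1) * a (2*n+1))"
    and cond2: "\<And>n. n \<ge> 1 \<Longrightarrow>
        (\<Sum>i=1..n. a (2*i-1) * (a (2*n-1) / a (2*n)) ^ (2*i-1)) < a 0"
    and cond3: "\<And>n. n \<ge> 1 \<Longrightarrow>
        (\<Sum>i=1..n. 2*real i * a (2*i) *
           ((2*real n * a (2*n)) / ((2*real n+1) * a (2*n+1))) ^ (2*i-1)) < a 1"
  shows "\<forall>m. (even m \<longrightarrow> num_real_roots (partial_poly a m) = 0)
            \<and> (odd m \<longrightarrow> num_real_roots (partial_poly a m) = 1)"
proof (intro allI conjI impI)
  fix m :: nat
  show "num_real_roots (partial_poly a m) = 0" if "even m"
    using num_real_roots_partial_poly_even[OF pos cond2, of "m div 2"]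
    by (simp add: even_two_times_div_two[OF that])
  show "num_real_roots (partial_poly a m) = 1" if "odd m"
    using num_real_roots_partial_poly_odd[OF pos cond3, of "m div 2"]
    by (metis odd_two_times_div_two_succ[OF that] Suc_eq_plus1)
qed

end
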